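(* Let $\mathcal{T}\in\mathbb{K}^{R\times R\times K}$ have $\mathbb{K}$-rank $R$ and full multilinear rank $(R,R,K)$, and let $\mathcal{T}=[\![\mathbf{A},\mathbf{B},\mathbf{C}]\!]$ be a CPD of $\mathcal{T}$. Then $\mathcal{T}$ is slice mix invertible and the factor matrices $\mathbf{A},\mathbf{B}\in\mathbb{K}^{R\times R}$ are invertible.
   Context: $\mathbb{K}$ denotes $\mathbb{R}$ or $\mathbb{C}$. The $\mathbb{K}$-rank is the least number of rank one tensors $\mathbf{a}\otimes\mathbf{b}\otimes\mathbf{c}$ with $\mathbb{K}$-valued factors summing to the tensor; a minimal sum $\sum_{r=1}^R\mathbf{a}_r\otimes\mathbf{b}_r\otimes\mathbf{c}_r$ is a CPD written $[\![\mathbf{A},\mathbf{B},\mathbf{C}]\!]$ (columns $\mathbf{a}_r$, etc.). Multilinear rank $(R_1,R_2,R_3)$: $R_i$ is the dimension of the span of the mode-$i$ fibers. $\mathcal{T}$ is slice mix invertible if some linear combination of its frontal slices $\mathcal{T}(:,:,k)$ is an invertible matrix. *)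

theory Defs
  imports "HOL-Analysis.Analysis"
begin

text \<open>Third-order tensors of size I x J x K over a field 'a are functions
  'i => 'j => 'k => 'a on finite index types; dimensions are CARD('i) etc.\<close>

definition has_rank_le_decomp :: "('i::finite \<Rightarrow> 'j::finite \<Rightarrow> 'k::finite \<Rightarrow> 'a::field) \<Rightarrow> nat \<Rightarrow> bool" where
  "has_rank_le_decomp T n \<longleftrightarrow>
     (\<exists>(a::nat \<Rightarrow> 'i \<Rightarrow> 'a) (b::nat \<Rightarrow> 'j \<Rightarrow> 'a) (c::nat \<Rightarrow> 'k \<Rightarrow> 'a).
        T = (\<lambda>i j k. \<Sum>r<n. a r i * b r j * c r k))"

definition tensor_rank :: "('i::finite \<Rightarrow> 'j::finite \<Rightarrow> 'k::finite \<Rightarrow> 'a::field) \<Rightarrow> nat" where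
  "tensor_rank T = (LEAST n. has_rank_le_decomp T n)"

text \<open>[[A,B,C]] with R columns indexed by 'r; A is I x R, B is J x R, C is K x R.\<close>
definition cpd :: "'a::field ^'r::finite^'i::finite \<Rightarrow> 'a^'r^'j::finite \<Rightarrow> 'a^'r^'k::finite
                   \<Rightarrow> ('i \<Rightarrow> 'j \<Rightarrow> 'k \<Rightarrow> 'a)" where
  "cpd A B C = (\<lambda>i j k. \<Sum>r\<in>UNIV. A$i$r * B$j$r * C$k$r)"

definition mode1_fibers :: "('i::finite \<Rightarrow> 'j::finite \<Rightarrow> 'k::finite \<Rightarrow> 'a::field) \<Rightarrow> ('a^'i) set" where
  "mode1_fibers T = {(\<chi> i. T i j k) | j k. True}"
definition mode2_fibers :: "('i::finite \<Rightarrow> 'j::finite \<Rightarrow> 'k::finite \<Rightarrow> 'a::field) \<Rightarrow> ('a^'j) set" where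
  "mode2_fibers T = {(\<chi> j. T i j k) | i k. True}"
definition mode3_fibers :: "('i::finite \<Rightarrow> 'j::finite \<Rightarrow> 'k::finite \<Rightarrow> 'a::field) \<Rightarrow> ('a^'k) set" where
  "mode3_fibers T = {(\<chi> k. T i j k) | i j. True}"

definition multilinear_rank :: "('i::finite \<Rightarrow> 'j::finite \<Rightarrow> 'k::finite \<Rightarrow> 'a::field) \<Rightarrow> nat \<times> nat \<times> nat" where
  "multilinear_rank T = (vec.dim (mode1_fibers T), vec.dim (mode2_fibers T), vec.dim (mode3_fibers T))"

definition frontal_slice :: "('i::finite \<Rightarrow> 'j::finite \<Rightarrow> 'k::finite \<Rightarrow> 'a::field) \<Rightarrow> 'k \<Rightarrow> 'a^'j^'i" where
  "frontal_slice T k = (\<chi> i j. T i j k)"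

definition slice_mix_invertible :: "('i::finite \<Rightarrow> 'i \<Rightarrow> 'k::finite \<Rightarrow> 'a::field) \<Rightarrow> bool" where
  "slice_mix_invertible T \<longleftrightarrow> (\<exists>x :: 'k \<Rightarrow> 'a. invertible (\<chi> i j. \<Sum>k\<in>UNIV. x k * frontal_slice T k $ i $ j))"

end

theory Submission
  imports Defs
begin

text \<open>Every mode-1 fiber of \<open>[[A,B,C]]\<close> lies in the column space of \<open>A\<close>, so full
  mode-1 rank makes \<open>A\<close> surjective, hence invertible; likewise for \<open>B\<close>. Since the CPD is
  minimal, no column of \<open>C\<close> vanishes (it could be dropped otherwise), so over an infinite
  field some \<open>x\<close> makes every entry of \<open>C\<^sup>T x\<close> nonzero. The slice mix with coefficients
  \<open>x\<close> is \<open>A diag(C\<^sup>T x) B\<^sup>T\<close>, a product of invertible matrices.\<close>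

definition diag_matrix :: "('r::finite \<Rightarrow> 'a::zero) \<Rightarrow> 'a^'r^'r" where
  "diag_matrix d = (\<chi> i j. if i = j then d i else 0)"

lemma det_diag_matrix: "det (diag_matrix d) = (\<Prod>i\<in>UNIV. d i)"
  by (subst det_diagonal) (auto simp: diag_matrix_def)

lemma invertible_if_full_dim_subset_range:
  fixes A :: "'a::field^'r::finite^'r"
  assumes sub: "S \<subseteq> range ((*v) A)" and dim: "vec.dim S = CARD('r)"
  shows "invertible A"
proof -
  have "vec.span S = UNIV"
    using dim vec.dim_eq_full vec_dim_card vec.dim_UNIV vec.dimension_def by metis
  moreover have "vec.subspace (range ((*v) A))"
    by (rule vec.subspace_UNIV[THEN vec.subspace_image[rotated]])
  then have "vec.span S \<subseteq> range ((*v) A)"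
    using sub by (simp add: vec.span_minimal)
  ultimately have "surj ((*v) A)" by auto
  then show ?thesis
    using matrix_right_invertible_surjective invertible_right_inverse by blast
qed

lemma mode1_fibers_cpd_subset_range: "mode1_fibers (cpd A B C) \<subseteq> range ((*v) A)"
proof
  fix f assume "f \<in> mode1_fibers (cpd A B C)"
  then obtain j k where "f = (\<chi> i. cpd A B C i j k)" by (auto simp: mode1_fibers_def)
  then have "f = A *v (\<chi> r. B$j$r * C$k$r)"
    by (simp add: cpd_def matrix_vector_mult_def vec_eq_iff mult.assoc)
  then show "f \<in> range ((*v) A)" by blast
qed

lemma mode2_fibers_cpd_subset_range: "mode2_fibers (cpd A B C) \<subseteq> range ((*v) B)"
proof
  fix f assume "f \<in> mode2_fibers (cpd A B C)"
  then obtain i k where "f = (\<chi> j. cpd A B C i j k)" by (auto simp: mode2_fibers_def)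
  then have "f = B *v (\<chi> r. A$i$r * C$k$r)"
    by (simp add: cpd_def matrix_vector_mult_def vec_eq_iff mult.assoc mult.left_commute)
  then show "f \<in> range ((*v) B)" by blast
qed

lemma has_rank_le_decomp_cpd_support:
  fixes A :: "'a::field^'r::finite^'i::finite" and B :: "'a^'r^'j::finite" and C :: "'a^'r^'k::finite"
  assumes zero_outside: "\<And>r k. r \<notin> M \<Longrightarrow> C$k$r = 0"
  shows "has_rank_le_decomp (cpd A B C) (card M)"
proof -
  obtain h where h: "bij_betw h {..<card M} M"
    using ex_bij_betw_nat_finite[of M] by (auto simp: atLeast0LessThan)
  have "cpd A B C i j k = (\<Sum>n<card M. A$i$(h n) * B$j$(h n) * C$k$(h n))" for i j k
  proof -
    have "cpd A B C i j k = (\<Sum>r\<in>M. A$i$r * B$j$r * C$k$r)"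
      unfolding cpd_def by (rule sum.mono_neutral_right) (auto simp: zero_outside)
    also have "\<dots> = (\<Sum>n<card M. A$i$(h n) * B$j$(h n) * C$k$(h n))"
      using sum.reindex_bij_betw[OF h, of "\<lambda>r. A$i$r * B$j$r * C$k$r"] by simp
    finally show ?thesis .
  qed
  then have "cpd A B C = (\<lambda>i j k. \<Sum>n<card M. A$i$(h n) * B$j$(h n) * C$k$(h n))"
    by blast
  then show ?thesis
    unfolding has_rank_le_decomp_def by (intro exI) assumption
qed

lemma cpd_column_nonzero_if_rank:
  fixes A :: "'a::field^'r::finite^'i::finite" and B :: "'a^'r^'j::finite" and C :: "'a^'r^'k::finite"
  assumes rank: "tensor_rank (cpd A B C) = CARD('r)"
  shows "\<exists>k. C$k$r \<noteq> 0"
proof (rule ccontr)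
  assume "\<not> (\<exists>k. C$k$r \<noteq> 0)"
  then have "has_rank_le_decomp (cpd A B C) (card (UNIV - {r}))"
    by (intro has_rank_le_decomp_cpd_support) auto
  then have "tensor_rank (cpd A B C) \<le> CARD('r) - 1"
    unfolding tensor_rank_def by (simp add: card_Diff_subset Least_le)
  moreover have "CARD('r) > 0" by simp
  ultimately show False
    using rank by linarith
qed

lemma ex_avoid_finite_hyperplanes:
  fixes c :: "'b \<Rightarrow> 'k::finite \<Rightarrow> 'a::field_char_0"
  assumes "finite S" "\<forall>r\<in>S. \<exists>k. c r k \<noteq> 0"
  shows "\<exists>x. \<forall>r\<in>S. (\<Sum>k\<in>UNIV. x k * c r k) \<noteq> 0"
  using assms
proof (induction S rule: finite_induct)
  case empty
  then show ?case by auto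
next
  case (insert s S)
  define l where "l r x = (\<Sum>k\<in>UNIV. x k * c r k)" for r x
  have l_affine: "l r (\<lambda>k. x k + t * y k) = l r x + t * l r y" for r x y t
    by (simp add: l_def algebra_simps sum.distrib sum_distrib_left)
  obtain x where x: "\<forall>r\<in>S. l r x \<noteq> 0" using insert by (auto simp: l_def)
  obtain ks where "c s ks \<noteq> 0" using insert by auto
  define y where "y = (\<lambda>k. if k = ks then 1 else (0::'a))"
  have "l s y = c s ks"
    unfolding l_def y_def by (simp add: if_distrib[of "\<lambda>a. a * _"] cong: if_cong)
  with \<open>c s ks \<noteq> 0\<close> have ly: "l s y \<noteq> 0" by simp
  \<comment> \<open>Move from \<open>x\<close> along \<open>y\<close>: each \<open>r\<close> forbids at most one value of \<open>t\<close>.\<close>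
  define bad where "bad = (\<lambda>r. - l r x / l r y) ` insert s S"
  have "finite bad" using insert by (simp add: bad_def)
  then obtain t where t: "t \<notin> bad"
    using ex_new_if_finite infinite_UNIV_char_0 by blast
  have "l r (\<lambda>k. x k + t * y k) \<noteq> 0" if r: "r \<in> insert s S" for r
  proof
    assume "l r (\<lambda>k. x k + t * y k) = 0"
    then have e: "l r x + t * l r y = 0" by (simp add: l_affine)
    with r x ly have "l r y \<noteq> 0" by auto
    with e have "t = - l r x / l r y" by (simp add: field_simps add_eq_0_iff)
    with t r show False by (auto simp: bad_def)
  qed
  then show ?case
    unfolding l_def by (intro exI[of _ "\<lambda>k. x k + t * y k"]) blast
qed

lemma slice_mix_cpd:
  fixes A :: "'a::field^'r::finite^'i::finite" and B :: "'a^'r^'j::finite" and C :: "'a^'r^'k::finite"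
  shows "(\<chi> i j. \<Sum>k\<in>UNIV. x k * frontal_slice (cpd A B C) k $ i $ j)
           = A ** diag_matrix (\<lambda>r. \<Sum>k\<in>UNIV. x k * C$k$r) ** transpose B"
proof -
  define d where "d = (\<lambda>r. \<Sum>k\<in>UNIV. x k * C$k$r)"
  have "(\<Sum>k\<in>UNIV. x k * frontal_slice (cpd A B C) k $ i $ j)
          = (A ** diag_matrix d ** transpose B) $ i $ j" for i j
  proof -
    have "(\<Sum>k\<in>UNIV. x k * frontal_slice (cpd A B C) k $ i $ j)
            = (\<Sum>k\<in>UNIV. \<Sum>r\<in>UNIV. x k * (A$i$r * B$j$r * C$k$r))"
      by (simp add: frontal_slice_def cpd_def sum_distrib_left)
    also have "\<dots> = (\<Sum>r\<in>UNIV. A$i$r * d r * B$j$r)"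
      by (subst sum.swap) (simp add: d_def sum_distrib_left sum_distrib_right mult_ac)
    also have "\<dots> = (A ** diag_matrix d ** transpose B) $ i $ j"
      by (simp add: matrix_matrix_mult_def transpose_def diag_matrix_def if_distrib
          cong: if_cong)
    finally show ?thesis .
  qed
  then show ?thesis by (simp add: vec_eq_iff d_def)
qed

lemma cpd_slice_mix_invertible:
  fixes A B :: "'a::field_char_0^'r::finite^'r" and C :: "'a^'r^'k::finite"
  assumes "invertible A" "invertible B" and C_columns: "\<And>r. \<exists>k. C$k$r \<noteq> 0"
  shows "slice_mix_invertible (cpd A B C)"
proof -
  obtain x where x: "\<forall>r\<in>UNIV. (\<Sum>k\<in>UNIV. x k * C$k$r) \<noteq> 0"
    using ex_avoid_finite_hyperplanes[of UNIV "\<lambda>r k. C$k$r"] C_columns by auto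
  then have "det (diag_matrix (\<lambda>r. \<Sum>k\<in>UNIV. x k * C$k$r)) \<noteq> 0"
    by (simp add: det_diag_matrix)
  with assms have "invertible (A ** diag_matrix (\<lambda>r. \<Sum>k\<in>UNIV. x k * C$k$r) ** transpose B)"
    by (simp add: invertible_det_nz det_mul)
  then show ?thesis
    unfolding slice_mix_invertible_def slice_mix_cpd by blast
qed

lemma minimal_cpd_slice_mix_invertible:
  fixes A B :: "'a::field_char_0^'r::finite^'r" and C :: "'a^'r^'k::finite"
  assumes rank: "tensor_rank (cpd A B C) = CARD('r)"
    and ml_rank: "multilinear_rank (cpd A B C) = (CARD('r), CARD('r), n)"
  shows "slice_mix_invertible (cpd A B C) \<and> invertible A \<and> invertible B"
proof -
  have "invertible A"
    using ml_rank invertible_if_full_dim_subset_range[OF mode1_fibers_cpd_subset_range[of A B C]]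
    by (simp add: multilinear_rank_def)
  moreover have "invertible B"
    using ml_rank invertible_if_full_dim_subset_range[OF mode2_fibers_cpd_subset_range[of A B C]]
    by (simp add: multilinear_rank_def)
  moreover have "\<And>r. \<exists>k. C$k$r \<noteq> 0"
    using rank by (rule cpd_column_nonzero_if_rank)
  ultimately show ?thesis
    using cpd_slice_mix_invertible by blast
qed

theorem lemma3p1:
  shows "(\<forall>(T :: 'r::finite \<Rightarrow> 'r \<Rightarrow> 'k::finite \<Rightarrow> real)
            (A :: real^'r^'r) (B :: real^'r^'r) (C :: real^'r^'k).
            tensor_rank T = CARD('r) \<and>
            multilinear_rank T = (CARD('r), CARD('r), CARD('k)) \<and>
            T = cpd A B C
            \<longrightarrow> slice_mix_invertible T \<and> invertible A \<and> invertible B)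
       \<and> (\<forall>(T :: 'r \<Rightarrow> 'r \<Rightarrow> 'k \<Rightarrow> complex)
            (A :: complex^'r^'r) (B :: complex^'r^'r) (C :: complex^'r^'k).
            tensor_rank T = CARD('r) \<and>
            multilinear_rank T = (CARD('r), CARD('r), CARD('k)) \<and>
            T = cpd A B C
            \<longrightarrow> slice_mix_invertible T \<and> invertible A \<and> invertible B)"
  by (metis minimal_cpd_slice_mix_invertible)

end
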